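(* Assume the following setting. (i) $X$ is a Banach space, and for each $0<h<1$, $X_h\subseteq X$ is a closed subspace. (ii) $\pi_h:X\to X_h$ is bounded and linear, with $\Vert\pi_h\Vert_{L(X)}$ bounded independently of $h$ and $\pi_hx=x$ for $x\in X_h$. (iii) $A:D(A)\subseteq X\to X$ is a closed, densely defined linear operator, and there are $\lambda\ge0$, $\delta\in(0,\pi/2)$, $M\ge1$ with $\sigma(\lambda+A)\subseteq\Sigma_\delta$ and $\Vert(z-\lambda-A)^{-1}x\Vert_X\le\frac M{|z|}\Vert x\Vert_X$ for all $x\in X$, $z\notin\Sigma_\delta$. (iv) $A_h:X_h\to X_h$ are linear operators with $\sigma(\lambda+A_h)\subseteq\Sigma_\delta$ and $\Vert(z-\lambda-A_h)^{-1}x\Vert_X\le\frac M{|z|}\Vert x\Vert_X$ for all $x\in X_h$, $z\notin\Sigma_\delta$, for all $h$. (v) For some $r>0$, $\Vert((\lambda+A)^{-1}-(\lambda+A_h)^{-1}\pi_h)x\Vert_X\le Ch^r\Vert x\Vert_X$ for all $x\in X$. (vi) $\Vert A_hx\Vert_X\le Ch^{-r}\Vert x\Vert_X$ for all $x\in X_h$. Then there is $C>0$, independent of $h$, such that $$\Vert(\lambda+A_h)\pi_hx\Vert_X\le C\Vert(\lambda+A)x\Vert_X\quad\text{for all } x\in D(A).$$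
   Context: $\Sigma_\delta:=\{z\in\mathbb{C}\setminus\{0\}:|\arg z|<\delta\}$. *)

theory Defs
  imports "HOL-Analysis.Analysis"
begin

text \<open>A complex Banach space is modelled as a real Banach space type together with a
  complex scalar multiplication sc extending the real one and compatible with the norm.\<close>
definition complex_banach_scaling :: "(complex \<Rightarrow> 'a::banach \<Rightarrow> 'a) \<Rightarrow> bool" where
  "complex_banach_scaling sc \<longleftrightarrow>
     Vector_Spaces.vector_space sc \<and>
     (\<forall>r x. sc (complex_of_real r) x = r *\<^sub>R x) \<and>
     (\<forall>c x. norm (sc c x) = cmod c * norm x)"

definition csubspace :: "(complex \<Rightarrow> 'a::banach \<Rightarrow> 'a) \<Rightarrow> 'a set \<Rightarrow> bool" where
  "csubspace sc S \<longleftrightarrow> 0 \<in> S \<and> (\<forall>x\<in>S. \<forall>y\<in>S. x + y \<in> S) \<and> (\<forall>c. \<forall>x\<in>S. sc c x \<in> S)"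

definition clinear_on :: "(complex \<Rightarrow> 'a::banach \<Rightarrow> 'a) \<Rightarrow> 'a set \<Rightarrow> ('a \<Rightarrow> 'a) \<Rightarrow> bool" where
  "clinear_on sc D T \<longleftrightarrow> csubspace sc D \<and>
     (\<forall>x\<in>D. \<forall>y\<in>D. T (x + y) = T x + T y) \<and> (\<forall>c. \<forall>x\<in>D. T (sc c x) = sc c (T x))"

definition closed_operator :: "'a set \<Rightarrow> ('a::banach \<Rightarrow> 'a) \<Rightarrow> bool" where
  "closed_operator D T \<longleftrightarrow> closed {(x, T x) | x. x \<in> D}"

definition op_inv :: "'a set \<Rightarrow> ('a \<Rightarrow> 'a) \<Rightarrow> 'a \<Rightarrow> 'a" where
  "op_inv D T = the_inv_into D T"

definition resolvent_set :: "(complex \<Rightarrow> 'a::banach \<Rightarrow> 'a) \<Rightarrow> 'a set \<Rightarrow> 'a set \<Rightarrow> ('a \<Rightarrow> 'a) \<Rightarrow> complex set" where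
  "resolvent_set sc Y D T = {z. bij_betw (\<lambda>x. sc z x - T x) D Y \<and>
      (\<exists>K. \<forall>y\<in>Y. norm (op_inv D (\<lambda>x. sc z x - T x) y) \<le> K * norm y)}"

definition op_spectrum :: "(complex \<Rightarrow> 'a::banach \<Rightarrow> 'a) \<Rightarrow> 'a set \<Rightarrow> 'a set \<Rightarrow> ('a \<Rightarrow> 'a) \<Rightarrow> complex set" where
  "op_spectrum sc Y D T = - resolvent_set sc Y D T"

definition resolvent :: "(complex \<Rightarrow> 'a::banach \<Rightarrow> 'a) \<Rightarrow> 'a set \<Rightarrow> ('a \<Rightarrow> 'a) \<Rightarrow> complex \<Rightarrow> 'a \<Rightarrow> 'a" where
  "resolvent sc D T z = op_inv D (\<lambda>x. sc z x - T x)"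

definition sector :: "real \<Rightarrow> complex set" where
  "sector \<delta> = {z. z \<noteq> 0 \<and> \<bar>Arg z\<bar> < \<delta>}"

end

theory Submission
  imports Defs
begin

text \<open>Write \<open>B = \<lambda> + A\<close> and \<open>B\<^sub>h = \<lambda> + A\<^sub>h\<close>. For \<open>x \<in> D(A)\<close> put \<open>y = B x\<close> and
  \<open>v = B\<^sub>h\<^sup>-\<^sup>1 \<pi>\<^sub>h y \<in> X\<^sub>h\<close>; then \<open>\<pi>\<^sub>h x = \<pi>\<^sub>h (x - v) + v\<close>, so
  \<open>B\<^sub>h \<pi>\<^sub>h x = B\<^sub>h \<pi>\<^sub>h (x - v) + \<pi>\<^sub>h y\<close>. The approximation property gives
  \<open>\<parallel>x - v\<parallel> \<le> C h\<^sup>r \<parallel>y\<parallel>\<close>, and the inverse estimate costs exactly the compensating factor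
  \<open>h\<^sup>-\<^sup>r\<close>, so both terms are bounded by a multiple of \<open>\<parallel>y\<parallel>\<close> uniformly in \<open>h\<close>.
  Of the sectoriality hypotheses only \<open>0 \<notin> \<Sigma>\<^sub>\<delta>\<close>, i.e. invertibility of \<open>B\<close> and \<open>B\<^sub>h\<close>, is
  needed; closedness, density and the resolvent bounds are not.\<close>

lemma complex_banach_scaling_zero:
  "complex_banach_scaling sc \<Longrightarrow> sc 0 x = 0"
  unfolding complex_banach_scaling_def by (metis of_real_0 scaleR_zero_left)

lemma complex_banach_scaling_minus_one:
  "complex_banach_scaling sc \<Longrightarrow> sc (-1) x = - x"
  unfolding complex_banach_scaling_def by (metis of_real_1 of_real_minus scaleR_minus1_left)

lemma csubspace_uminus_image:
  assumes "complex_banach_scaling sc" "csubspace sc S"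
  shows "uminus ` S = S"
proof -
  have "- x \<in> S" if "x \<in> S" for x
    using assms that complex_banach_scaling_minus_one unfolding csubspace_def by metis
  then show ?thesis
    by (auto intro: image_eqI[where x = "- _"])
qed

lemma zero_notin_sector: "0 \<notin> sector \<delta>"
  unfolding sector_def by simp

lemma bij_betw_of_zero_in_resolvent_set:
  assumes sc: "complex_banach_scaling sc"
    and res: "0 \<in> resolvent_set sc Y D T"
    and Y: "uminus ` Y = Y"
  shows "bij_betw T D Y"
proof -
  have "bij_betw (\<lambda>x. - T x) D Y"
    using res unfolding resolvent_set_def by (simp add: complex_banach_scaling_zero[OF sc])
  moreover have "bij_betw uminus Y Y"
    using Y by (simp add: bij_betw_def)
  ultimately have "bij_betw (uminus \<circ> (\<lambda>x. - T x)) D Y"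
    by (rule bij_betw_trans)
  then show ?thesis
    by (simp add: comp_def)
qed

lemma bij_betw_of_op_spectrum_subset_sector:
  assumes "complex_banach_scaling sc" "op_spectrum sc Y D T \<subseteq> sector \<delta>" "uminus ` Y = Y"
  shows "bij_betw T D Y"
  using assms zero_notin_sector
  by (intro bij_betw_of_zero_in_resolvent_set) (auto simp: op_spectrum_def)

lemma op_inv_apply:
  "bij_betw T D Y \<Longrightarrow> x \<in> D \<Longrightarrow> op_inv D T (T x) = x"
  unfolding op_inv_def bij_betw_def by (simp add: the_inv_into_f_f)

lemma op_inv_in_domain:
  "bij_betw T D Y \<Longrightarrow> y \<in> Y \<Longrightarrow> op_inv D T y \<in> D"
  unfolding op_inv_def using bij_betw_the_inv_into bij_betwE by blast

lemma apply_op_inv: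
  "bij_betw T D Y \<Longrightarrow> y \<in> Y \<Longrightarrow> T (op_inv D T y) = y"
  unfolding op_inv_def by (rule f_the_inv_into_f_bij_betw)

lemma clinear_on_UNIV_additive:
  "clinear_on sc UNIV T \<Longrightarrow> Modules.additive T"
  unfolding clinear_on_def by (simp add: Modules.additive.intro)

lemma obtain_pos_uniform_norm_bound:
  fixes f :: "'i \<Rightarrow> 'a::real_normed_vector \<Rightarrow> 'b::real_normed_vector"
  assumes "\<exists>K. \<forall>i. P i \<longrightarrow> (\<forall>x. norm (f i x) \<le> K * norm x)"
  obtains K where "K > 0" "\<And>i x. P i \<Longrightarrow> norm (f i x) \<le> K * norm x"
proof -
  obtain K0 where K0: "\<And>i x. P i \<Longrightarrow> norm (f i x) \<le> K0 * norm x"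
    using assms by blast
  have "K0 * norm x \<le> (\<bar>K0\<bar> + 1) * norm x" for x
    by (intro mult_right_mono) auto
  with K0 show thesis
    by (intro that[of "\<bar>K0\<bar> + 1"]) (auto intro: order_trans)
qed

lemma norm_scaleR_add_le:
  fixes T :: "'a::real_normed_vector \<Rightarrow> 'a"
  assumes "lam \<ge> 0" "norm (T w) \<le> c * norm w"
  shows "norm (lam *\<^sub>R w + T w) \<le> (lam + c) * norm w"
  using norm_triangle_ineq[of "lam *\<^sub>R w" "T w"] assms by (simp add: distrib_right)

lemma norm_op_projection_le:
  fixes P B :: "'a::real_normed_vector \<Rightarrow> 'a"
  assumes P_add: "Modules.additive P" and P_into: "\<And>u. P u \<in> V" and P_id: "\<And>u. u \<in> V \<Longrightarrow> P u = u"
    and P_bound: "\<And>u. norm (P u) \<le> K * norm u" and K: "K \<ge> 0"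
    and B_add: "\<And>u w. u \<in> V \<Longrightarrow> w \<in> V \<Longrightarrow> B (u + w) = B u + B w"
    and B_bound: "\<And>w. w \<in> V \<Longrightarrow> norm (B w) \<le> L * norm w" and L: "L \<ge> 0"
    and v: "v \<in> V" "B v = P y"
    and approx: "norm (x - v) \<le> \<epsilon> * norm y"
  shows "norm (B (P x)) \<le> K * (L * \<epsilon> + 1) * norm y"
proof -
  have "P x = P (x - v) + v"
    using Modules.additive.diff[OF P_add, of x v] P_id[OF v(1)] by simp
  then have split: "B (P x) = B (P (x - v)) + P y"
    using B_add[OF P_into v(1)] v(2) by simp
  have "norm (B (P (x - v))) \<le> L * (K * norm (x - v))"
    using B_bound[OF P_into] P_bound L by (meson mult_left_mono order_trans)
  also have "\<dots> \<le> L * (K * (\<epsilon> * norm y))"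
    using approx K L by (intro mult_left_mono) auto
  finally have "norm (B (P (x - v))) \<le> K * L * \<epsilon> * norm y"
    by (simp add: algebra_simps)
  moreover have "norm (B (P x)) \<le> norm (B (P (x - v))) + norm (P y)"
    unfolding split by (rule norm_triangle_ineq)
  ultimately show ?thesis
    using P_bound[of y] by (simp add: algebra_simps)
qed

theorem lemma2p10:
  fixes sc :: "complex \<Rightarrow> 'a::banach \<Rightarrow> 'a"
    and Xh :: "real \<Rightarrow> 'a set"
    and \<pi> :: "real \<Rightarrow> 'a \<Rightarrow> 'a"
    and D :: "'a set"
    and A :: "'a \<Rightarrow> 'a"
    and Ah :: "real \<Rightarrow> 'a \<Rightarrow> 'a"
    and lam \<delta> M C r :: real
  assumes X: "complex_banach_scaling sc"
    and Xh: "\<And>h. 0 < h \<Longrightarrow> h < 1 \<Longrightarrow> csubspace sc (Xh h) \<and> closed (Xh h)"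
    and pi_lin: "\<And>h. 0 < h \<Longrightarrow> h < 1 \<Longrightarrow>
        clinear_on sc UNIV (\<pi> h) \<and> (\<exists>K. \<forall>x. norm (\<pi> h x) \<le> K * norm x) \<and> (\<forall>x. \<pi> h x \<in> Xh h)"
    and pi_unif: "\<exists>K. \<forall>h. 0 < h \<and> h < 1 \<longrightarrow> (\<forall>x. norm (\<pi> h x) \<le> K * norm x)"
    and pi_proj: "\<And>h x. 0 < h \<Longrightarrow> h < 1 \<Longrightarrow> x \<in> Xh h \<Longrightarrow> \<pi> h x = x"
    and A_lin: "clinear_on sc D A"
    and A_closed: "closed_operator D A"
    and A_dense: "closure D = UNIV"
    and lam: "lam \<ge> 0"
    and delta: "0 < \<delta>" "\<delta> < pi / 2"
    and M: "M \<ge> 1"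
    and A_spec: "op_spectrum sc UNIV D (\<lambda>x. lam *\<^sub>R x + A x) \<subseteq> sector \<delta>"
    and A_res: "\<And>z x. z \<notin> sector \<delta> \<Longrightarrow> z \<noteq> 0 \<Longrightarrow>
        norm (resolvent sc D (\<lambda>x. lam *\<^sub>R x + A x) z x) \<le> M / cmod z * norm x"
    and Ah_lin: "\<And>h. 0 < h \<Longrightarrow> h < 1 \<Longrightarrow> clinear_on sc (Xh h) (Ah h) \<and> (\<forall>x\<in>Xh h. Ah h x \<in> Xh h)"
    and Ah_spec: "\<And>h. 0 < h \<Longrightarrow> h < 1 \<Longrightarrow>
        op_spectrum sc (Xh h) (Xh h) (\<lambda>x. lam *\<^sub>R x + Ah h x) \<subseteq> sector \<delta>"
    and Ah_res: "\<And>h z x. 0 < h \<Longrightarrow> h < 1 \<Longrightarrow> z \<notin> sector \<delta> \<Longrightarrow> z \<noteq> 0 \<Longrightarrow> x \<in> Xh h \<Longrightarrow>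
        norm (resolvent sc (Xh h) (\<lambda>x. lam *\<^sub>R x + Ah h x) z x) \<le> M / cmod z * norm x"
    and r: "r > 0"
    and approx: "\<And>h x. 0 < h \<Longrightarrow> h < 1 \<Longrightarrow>
        norm (op_inv D (\<lambda>x. lam *\<^sub>R x + A x) x
              - op_inv (Xh h) (\<lambda>x. lam *\<^sub>R x + Ah h x) (\<pi> h x)) \<le> C * h powr r * norm x"
    and inverse_est: "\<And>h x. 0 < h \<Longrightarrow> h < 1 \<Longrightarrow> x \<in> Xh h \<Longrightarrow>
        norm (Ah h x) \<le> C * h powr (- r) * norm x"
  shows "\<exists>C'>0. \<forall>h. 0 < h \<and> h < 1 \<longrightarrow>
           (\<forall>x\<in>D. norm (lam *\<^sub>R \<pi> h x + Ah h (\<pi> h x)) \<le> C' * norm (lam *\<^sub>R x + A x))"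
proof -
  obtain K where K_pos: "K > 0" and K: "\<And>h x. 0 < h \<Longrightarrow> h < 1 \<Longrightarrow> norm (\<pi> h x) \<le> K * norm x"
    using pi_unif by (rule obtain_pos_uniform_norm_bound) blast
  have abs_C: "C * a * b \<le> \<bar>C\<bar> * a * b" if "a \<ge> 0" "b \<ge> 0" for a b
    using mult_right_mono[OF abs_ge_self, of "a * b" C] that by (simp add: mult.assoc)
  have B_bij: "bij_betw (\<lambda>x. lam *\<^sub>R x + A x) D UNIV"
    using bij_betw_of_op_spectrum_subset_sector[OF X A_spec] by simp
  define C' where "C' = K * (lam * \<bar>C\<bar> + C\<^sup>2 + 1)"
  have "C' > 0"
    unfolding C'_def using K_pos lam by (simp add: add_nonneg_pos)
  moreover have "norm (lam *\<^sub>R \<pi> h x + Ah h (\<pi> h x)) \<le> C' * norm (lam *\<^sub>R x + A x)"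
    if h: "0 < h" "h < 1" and x: "x \<in> D" for h x
  proof -
    define Bh where "Bh = (\<lambda>x. lam *\<^sub>R x + Ah h x)"
    define y where "y = lam *\<^sub>R x + A x"
    define v where "v = op_inv (Xh h) Bh (\<pi> h y)"
    have Xh_sub: "csubspace sc (Xh h)" and Bh_add: "clinear_on sc (Xh h) (Ah h)"
      using Xh[OF h] Ah_lin[OF h] by auto
    have Bh_bij: "bij_betw Bh (Xh h) (Xh h)"
      using bij_betw_of_op_spectrum_subset_sector[OF X Ah_spec[OF h]]
        csubspace_uminus_image[OF X Xh_sub] unfolding Bh_def by simp
    have v: "v \<in> Xh h" "Bh v = \<pi> h y"
      using pi_lin[OF h] op_inv_in_domain[OF Bh_bij] apply_op_inv[OF Bh_bij] unfolding v_def by auto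
    have x_v: "norm (x - v) \<le> \<bar>C\<bar> * h powr r * norm y"
      using approx[OF h, of y] op_inv_apply[OF B_bij x] abs_C[of "h powr r" "norm y"]
      unfolding y_def v_def Bh_def by simp
    have Bh_bound: "norm (Bh w) \<le> (lam + \<bar>C\<bar> * h powr (- r)) * norm w" if "w \<in> Xh h" for w
      using inverse_est[OF h that] abs_C[of "h powr (- r)" "norm w"] lam
      unfolding Bh_def by (intro norm_scaleR_add_le) auto
    have "norm (Bh (\<pi> h x)) \<le> K * ((lam + \<bar>C\<bar> * h powr (- r)) * (\<bar>C\<bar> * h powr r) + 1) * norm y"
    proof (rule norm_op_projection_le[where P = "\<pi> h" and B = Bh and V = "Xh h", OF _ _ _ _ _ _ Bh_bound _ v x_v])
      show "Bh (u + w) = Bh u + Bh w" if "u \<in> Xh h" "w \<in> Xh h" for u w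
        using Bh_add that unfolding clinear_on_def Bh_def by (simp add: scaleR_right_distrib)
    qed (use pi_lin[OF h] pi_proj[OF h] K[OF h] K_pos lam in \<open>auto simp: clinear_on_UNIV_additive\<close>)
    also have "(lam + \<bar>C\<bar> * h powr (- r)) * (\<bar>C\<bar> * h powr r) = lam * \<bar>C\<bar> * h powr r + C\<^sup>2"
      using h by (simp add: algebra_simps power2_eq_square flip: powr_add)
    also have "K * (lam * \<bar>C\<bar> * h powr r + C\<^sup>2 + 1) * norm y \<le> C' * norm y"
      using h r lam K_pos unfolding C'_def
      by (intro mult_right_mono mult_left_mono) (simp_all add: mult_left_le powr_le1)
    finally show ?thesis
      unfolding Bh_def y_def .
  qed
  ultimately show ?thesis
    by blast
qed

end
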